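(* For every integer $n>1$, the series $\sum_{k=1}^\infty c^*_n(k)/k$ converges, and $$\log\Phi^*_n(1)=\Lambda^*(n)=-\sum_{k=1}^\infty\frac{c^*_n(k)}{k}.$$
   Context: $\zeta_n=e^{2\pi i/n}$. $d\mid\mid n$ means $d\mid n$ and $\gcd(d,n/d)=1$; $(j,n)_*=\max\{d: d\mid j,\ d\mid\mid n\}$; $\Phi^*_n(x)=\prod_{1\le j\le n,\ (j,n)_*=1}(x-\zeta_n^j)$; $c^*_n(k)=\sum_{1\le j\le n,\ (j,n)_*=1}\zeta_n^{jk}$ is the unitary Ramanujan sum. $\Lambda^*(n)=a\log p$ if $n=p^a$ is a prime power ($a\ge1$), and $0$ otherwise. *)

theory Defs
  imports "HOL-Analysis.Analysis" "HOL-Computational_Algebra.Computational_Algebra"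
begin

definition zeta :: "nat \<Rightarrow> complex" where
  "zeta n = exp (2 * of_real pi * \<i> / of_nat n)"

definition unitary_dvd :: "nat \<Rightarrow> nat \<Rightarrow> bool" where
  "unitary_dvd d n \<longleftrightarrow> d dvd n \<and> coprime d (n div d)"

definition ugcd :: "nat \<Rightarrow> nat \<Rightarrow> nat" where
  "ugcd j n = Max {d. d dvd j \<and> unitary_dvd d n}"

definition unitary_cyclotomic :: "nat \<Rightarrow> complex poly" where
  "unitary_cyclotomic n = (\<Prod>j\<in>{j\<in>{1..n}. ugcd j n = 1}. [:- (zeta n ^ j), 1:])"

definition unitary_ramanujan :: "nat \<Rightarrow> nat \<Rightarrow> complex" where
  "unitary_ramanujan n k = (\<Sum>j\<in>{j\<in>{1..n}. ugcd j n = 1}. zeta n ^ (j * k))"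

definition Lambda_star :: "nat \<Rightarrow> real" where
  "Lambda_star n = (if \<exists>p a. prime p \<and> a \<ge> 1 \<and> n = p ^ a
     then (THE x. \<exists>p a. prime p \<and> a \<ge> 1 \<and> n = p ^ a \<and> x = real a * ln (real p))
     else 0)"

end

theory Submission
  imports Defs "HOL-Complex_Analysis.Contour_Integration"
begin

(*
  For |z| <= 1, z ~= 1 the series sum_k z^k/k converges to -Ln (1 - z): the remainder after N
  terms is the integral of -v^N/(1 - v) along [0, z], hence O(1/N). With z = zeta_n^j this gives
  -sum_k c*_n(k)/k = sum_j Ln (1 - zeta_n^j), the sum over the unitary residues j, which is a
  logarithm of Phi*_n(1) and is real because j |-> n - j conjugates its terms.

  (j, n)_* = 1 means that no prime-power part p^a || n divides j, so Phi*_n(1) is the product of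
  1 - zeta_n^j over 1 <= j < n with the multiples of these pairwise coprime parts left out. Leaving
  out the multiples of one more part b splits off the same kind of product for n/b (put j = b i);
  starting from prod_{1 <= j < m} (1 - zeta_m^j) = m, induction shows that the value is b once a
  single part b is left out and 1 once two or more are. Hence Phi*_n(1) = exp (Lambda*(n)).
*)

section \<open>The logarithmic series on the closed unit disc\<close>

lemma Re_less_one_if_norm_le_one:
  fixes z :: complex
  assumes "norm z \<le> 1" "z \<noteq> 1"
  shows "Re z < 1"
  using assms by (smt (verit, best) cmod_Im_le_iff complex.expand complex_Re_le_cmod one_complex.simps)

lemma Re_one_minus_segment_pos:
  fixes z :: complex
  assumes "norm z \<le> 1" "z \<noteq> 1" "t \<in> {0..1}"
  shows "Re (1 - of_real t * z) > 0"
proof -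
  have "Re z < 1" using Re_less_one_if_norm_le_one assms by blast
  with assms(3) have "t * Re z < 1"
    by (smt (verit, best) atLeastAtMost_iff mult_left_le_one_le mult_nonneg_nonpos)
  then show ?thesis by simp
qed

lemma log_series_remainder_has_derivative:
  fixes u :: complex
  assumes "1 - u \<notin> \<real>\<^sub>\<le>\<^sub>0"
  shows "((\<lambda>v. (\<Sum>k<N. v ^ Suc k / of_nat (Suc k)) + Ln (1 - v)) has_field_derivative
           - (u ^ N / (1 - u))) (at u)"
proof -
  have "u \<noteq> 1" using assms by auto
  then have geometric: "(\<Sum>k<N. u ^ k) + inverse (1 - u) * -1 = - (u ^ N / (1 - u))"
    by (simp add: sum_gp_strict inverse_eq_divide diff_divide_distrib[symmetric])
  have "((\<lambda>v. v ^ Suc k / of_nat (Suc k)) has_field_derivative u ^ k) (at u)" for k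
    by (rule DERIV_cong[OF DERIV_cdivide[OF DERIV_power[OF DERIV_ident]]]) (simp del: of_nat_Suc)
  moreover have "((\<lambda>v. Ln (1 - v)) has_field_derivative inverse (1 - u) * -1) (at u)"
    using assms by (intro DERIV_chain2[where f = Ln] has_field_derivative_Ln derivative_eq_intros) auto
  ultimately show ?thesis
    unfolding geometric[symmetric] by (intro DERIV_add DERIV_sum)
qed

lemma log_series_remainder_bound:
  fixes z :: complex
  assumes z: "norm z \<le> 1" "z \<noteq> 1"
    and \<delta>: "\<delta> > 0" "\<And>t. t \<in> {0..1} \<Longrightarrow> \<delta> \<le> norm (1 - of_real t * z)"
  shows "norm ((\<Sum>k<N. z ^ Suc k / of_nat (Suc k)) + Ln (1 - z)) \<le> 1 / (real (Suc N) * \<delta>)"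
proof -
  define R where "R v = (\<Sum>k<N. v ^ Suc k / of_nat (Suc k)) + Ln (1 - v)" for v :: complex
  define R' where "R' v = - (v ^ N / (1 - v))" for v :: complex
  have derivative: "(R has_field_derivative R' u) (at u within closed_segment 0 z)"
    if "u \<in> closed_segment 0 z" for u
  proof -
    from that obtain t where t: "t \<in> {0..1}" and u: "u = of_real t * z"
      by (auto simp: in_segment scaleR_conv_of_real)
    have "Re (1 - u) > 0"
      using Re_one_minus_segment_pos[OF z t] u by simp
    then have "1 - u \<notin> \<real>\<^sub>\<le>\<^sub>0"
      by (auto simp: complex_nonpos_Reals_iff)
    then show ?thesis
      unfolding R_def R'_def
      by (rule has_field_derivative_at_within[OF log_series_remainder_has_derivative])
  qed
  have "(R' has_contour_integral R z - R 0) (linepath 0 z)"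
    using contour_integral_primitive[OF derivative, of "linepath 0 z"] by simp
  moreover have "linepath 0 z t = of_real t * z" for t
    by (simp add: linepath_def scaleR_conv_of_real)
  ultimately have integral: "((\<lambda>t. R' (of_real t * z) * z) has_integral R z) {0..1}"
    by (simp add: has_contour_integral_linepath R_def)
  have majorant: "((\<lambda>t. t ^ N / \<delta>) has_integral 1 / (real (Suc N) * \<delta>)) {0..1}"
  proof -
    have "((\<lambda>t. t ^ Suc N / (real (Suc N) * \<delta>)) has_real_derivative t ^ N / \<delta>) (at t within {0..1})" for t
      by (rule has_field_derivative_at_within, rule DERIV_cong[OF DERIV_cdivide[OF DERIV_power[OF DERIV_ident]]])
         (use \<delta> in \<open>simp del: of_nat_Suc\<close>)
    then show ?thesis
      using fundamental_theorem_of_calculus[of 0 1 "\<lambda>t. t ^ Suc N / (real (Suc N) * \<delta>)"]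
      by (simp add: has_real_derivative_iff_has_vector_derivative)
  qed
  have "norm (R' (of_real t * z) * z) \<le> t ^ N / \<delta>" if "t \<in> {0..1}" for t
  proof -
    have "norm (R' (of_real t * z) * z) = t ^ N * norm z ^ Suc N / norm (1 - of_real t * z)"
      using that by (simp add: R'_def norm_mult norm_divide norm_power power_mult_distrib)
    also have "\<dots> \<le> t ^ N / \<delta>"
      using that z \<delta> by (intro frac_le mult_left_le power_le_one) auto
    finally show ?thesis .
  qed
  then have "norm (R z) \<le> 1 / (real (Suc N) * \<delta>)"
    using has_integral_norm_bound_integral_component[OF integral majorant, of 1] by simp
  then show ?thesis unfolding R_def .
qed

lemma sums_minus_Ln_one_minus:
  fixes z :: complex
  assumes "norm z \<le> 1" "z \<noteq> 1"
  shows "(\<lambda>k. z ^ Suc k / of_nat (Suc k)) sums (- Ln (1 - z))"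
proof -
  have "continuous_on {0..1} (\<lambda>t. norm (1 - of_real t * z))"
    by (intro continuous_intros)
  from continuous_attains_inf[OF compact_Icc _ this] obtain t0 where t0: "t0 \<in> {0..1}"
    and min: "\<And>t. t \<in> {0..1} \<Longrightarrow> norm (1 - of_real t0 * z) \<le> norm (1 - of_real t * z)"
    by auto
  define \<delta> where "\<delta> = norm (1 - of_real t0 * z)"
  have "Re (1 - of_real t0 * z) > 0"
    using Re_one_minus_segment_pos[OF assms t0] .
  then have "\<delta> > 0"
    unfolding \<delta>_def by (metis less_irrefl zero_less_norm_iff zero_complex.sel(1))
  have "\<delta> \<le> norm (1 - of_real t * z)" if "t \<in> {0..1}" for t
    using min[OF that] unfolding \<delta>_def .
  note bound = log_series_remainder_bound[OF assms \<open>\<delta> > 0\<close> this]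
  have "(\<lambda>N. (\<Sum>k<N. z ^ Suc k / of_nat (Suc k)) + Ln (1 - z)) \<longlonglongrightarrow> 0"
  proof (rule Lim_null_comparison)
    show "\<forall>\<^sub>F N in sequentially.
        norm ((\<Sum>k<N. z ^ Suc k / of_nat (Suc k)) + Ln (1 - z)) \<le> 1 / (real (Suc N) * \<delta>)"
      using bound by simp
    show "(\<lambda>N. 1 / (real (Suc N) * \<delta>)) \<longlonglongrightarrow> 0"
      using tendsto_divide_zero[OF LIMSEQ_inverse_real_of_nat, of \<delta>]
      by (simp add: inverse_eq_divide)
  qed
  then have "(\<lambda>N. (\<Sum>k<N. z ^ Suc k / of_nat (Suc k)) + Ln (1 - z) - Ln (1 - z)) \<longlonglongrightarrow> 0 - Ln (1 - z)"
    by (intro tendsto_diff tendsto_const)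
  then show ?thesis
    unfolding sums_def by simp
qed

section \<open>Roots of unity\<close>

lemma zeta_pow: "m > 0 \<Longrightarrow> zeta m ^ j = exp (2 * of_real pi * \<i> * of_nat j / of_nat m)"
  unfolding zeta_def by (simp add: exp_of_nat_mult[symmetric] mult_ac)

lemma zeta_pow_eq_1_iff: "m > 0 \<Longrightarrow> zeta m ^ j = 1 \<longleftrightarrow> m dvd j"
  using complex_root_unity_eq_1[of m j] by (simp add: zeta_pow)

lemma zeta_pow_eq_iff: "m > 0 \<Longrightarrow> zeta m ^ i = zeta m ^ j \<longleftrightarrow> i mod m = j mod m"
  using complex_root_unity_eq[of m i j] by (simp add: zeta_pow)

lemma norm_zeta_pow [simp]: "norm (zeta m ^ j) = 1"
  unfolding zeta_def by (simp add: norm_power)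

lemma zeta_pow_mult_divisor:
  assumes "b dvd m" "m > 0"
  shows "zeta m ^ (b * i) = zeta (m div b) ^ i"
proof -
  obtain c where c: "m = b * c" using assms(1) ..
  with assms(2) have "b > 0" "c > 0" by auto
  then show ?thesis
    using c by (simp add: zeta_pow field_simps)
qed

lemma cnj_zeta_pow:
  assumes "j \<le> m"
  shows "cnj (zeta m ^ j) = zeta m ^ (m - j)"
proof -
  have "zeta m ^ j * cnj (zeta m ^ j) = 1"
    using complex_norm_square[of "zeta m ^ j"] by simp
  moreover have "zeta m ^ j * zeta m ^ (m - j) = 1"
    using assms by (cases "m = 0") (simp_all add: power_add[symmetric] zeta_pow_eq_1_iff)
  moreover have "zeta m ^ j \<noteq> 0"
    by (simp add: zeta_def)
  ultimately show ?thesis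
    by (metis mult_left_cancel)
qed

lemma prod_linear_zeta_pow:
  assumes "m > 0"
  shows "(\<Prod>j<m. [:- (zeta m ^ j), 1:]) = monom 1 m - 1" (is "?P = _")
proof (rule poly_eqI_degree_lead_coeff[of _ m _ "(\<lambda>j. zeta m ^ j) ` {..<m}"])
  have deg: "degree ?P = m"
    by (subst degree_prod_eq_sum_degree) auto
  then have "coeff ?P m = lead_coeff ?P"
    by simp
  then show "coeff ?P m = coeff (monom 1 m - 1) m"
    using assms by (simp add: lead_coeff_prod)
  show "m \<le> card ((\<lambda>j. zeta m ^ j) ` {..<m})"
    using assms by (subst card_image) (auto simp: inj_on_def zeta_pow_eq_iff)
  show "degree ?P \<le> m"
    using deg by simp
  show "degree (monom (1 :: complex) m - 1) \<le> m"
    by (intro degree_diff_le) (auto simp: degree_monom_le)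
  fix x assume "x \<in> (\<lambda>j. zeta m ^ j) ` {..<m}"
  then obtain j where j: "j < m" "x = zeta m ^ j" by blast
  have "zeta m ^ m = 1"
    using assms by (simp add: zeta_pow_eq_1_iff)
  then have "x ^ m = 1"
    using j by (metis power_mult power_one mult.commute)
  with j show "poly ?P x = poly (monom 1 m - 1) x"
    by (auto simp: poly_prod poly_monom intro!: prod_zero)
qed

lemma prod_one_minus_zeta_pow:
  assumes "m > 0"
  shows "(\<Prod>j\<in>{1..<m}. 1 - zeta m ^ j) = of_nat m"
proof -
  have "[:-1, 1:] * (\<Prod>j\<in>{1..<m}. [:- (zeta m ^ j), 1:]) = (\<Prod>j<m. [:- (zeta m ^ j), 1:])"
    using assms by (simp add: lessThan_atLeast0 prod.atLeast_Suc_lessThan)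
  also have "\<dots> = [:-1, 1:] * (\<Sum>i<m. monom 1 i)"
    unfolding prod_linear_zeta_pow[OF assms] poly_eq_poly_eq_iff[symmetric]
    by (simp add: fun_eq_iff poly_monom poly_sum power_diff_1_eq algebra_simps)
  finally have "(\<Prod>j\<in>{1..<m}. [:- (zeta m ^ j), 1:]) = (\<Sum>i<m. monom 1 i)"
    by (rule mult_left_cancel[THEN iffD1, rotated]) simp
  then have "poly (\<Prod>j\<in>{1..<m}. [:- (zeta m ^ j), 1:]) 1 = poly (\<Sum>i<m. monom 1 i) 1"
    by simp
  then show ?thesis
    by (simp add: poly_prod poly_sum poly_monom)
qed

lemma zeta_pow_neq_1: "0 < j \<Longrightarrow> j < m \<Longrightarrow> zeta m ^ j \<noteq> 1"
  by (auto simp: zeta_pow_eq_1_iff dest: dvd_imp_le)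

section \<open>Sieving a product over roots of unity\<close>

definition sieve_prod :: "nat set \<Rightarrow> nat \<Rightarrow> complex" where
  "sieve_prod B m = (\<Prod>j | 1 \<le> j \<and> j < m \<and> (\<forall>b\<in>B. \<not> b dvd j). 1 - zeta m ^ j)"

lemma sieve_prod_empty: "m > 0 \<Longrightarrow> sieve_prod {} m = of_nat m"
  by (simp add: sieve_prod_def atLeastLessThan_def lessThan_def atLeast_def Collect_conj_eq[symmetric]
      prod_one_minus_zeta_pow[symmetric] conj_commute)

lemma sieve_prod_insert:
  assumes "b > 0" "b dvd m" "m > 0" and coprime: "\<And>c. c \<in> B \<Longrightarrow> coprime c b"
  shows "sieve_prod B m = sieve_prod (insert b B) m * sieve_prod B (m div b)"
proof -
  define X where "X = {j. 1 \<le> j \<and> j < m \<and> (\<forall>c\<in>B. \<not> c dvd j)}"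
  define Y where "Y = {i. 1 \<le> i \<and> i < m div b \<and> (\<forall>c\<in>B. \<not> c dvd i)}"
  have multiples: "X \<inter> {j. b dvd j} = (\<lambda>i. b * i) ` Y"
  proof (intro equalityI subsetI)
    fix j assume "j \<in> X \<inter> {j. b dvd j}"
    then obtain i where "j = b * i" "j \<in> X" by blast
    then show "j \<in> (\<lambda>i. b * i) ` Y"
      using assms unfolding X_def Y_def
      by (auto simp: less_mult_imp_div_less mult.commute intro!: image_eqI[of _ _ i])
  next
    fix j assume "j \<in> (\<lambda>i. b * i) ` Y"
    then show "j \<in> X \<inter> {j. b dvd j}"
      using assms unfolding X_def Y_def
      by (auto simp: coprime_dvd_mult_right_iff)
  qed
  have "finite X"
    unfolding X_def by (rule finite_subset[of _ "{..<m}"]) auto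
  then have "sieve_prod B m = (\<Prod>j\<in>X - {j. b dvd j}. 1 - zeta m ^ j) * (\<Prod>j\<in>X \<inter> {j. b dvd j}. 1 - zeta m ^ j)"
    unfolding sieve_prod_def X_def[symmetric] by (subst prod.Int_Diff[of _ _ "{j. b dvd j}"]) (simp_all add: mult.commute)
  also have "X - {j. b dvd j} = {j. 1 \<le> j \<and> j < m \<and> (\<forall>c\<in>insert b B. \<not> c dvd j)}"
    unfolding X_def by auto
  also have "(\<Prod>j\<in>X \<inter> {j. b dvd j}. 1 - zeta m ^ j) = (\<Prod>i\<in>Y. 1 - zeta m ^ (b * i))"
    unfolding multiples using \<open>b > 0\<close> by (subst prod.reindex) (auto simp: inj_on_def)
  also have "\<dots> = sieve_prod B (m div b)"
    unfolding sieve_prod_def Y_def using assms by (simp add: zeta_pow_mult_divisor)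
  finally show ?thesis
    unfolding sieve_prod_def .
qed

lemma sieve_prod_pairwise_coprime:
  assumes "finite B" "pairwise coprime B" "\<And>b. b \<in> B \<Longrightarrow> b > 1 \<and> b dvd m" "m > 0"
  shows "sieve_prod B m = of_nat (if B = {} then m else if card B = 1 then \<Prod>B else 1)"
  using assms
proof (induction B arbitrary: m rule: finite_induct)
  case empty
  then show ?case by (simp add: sieve_prod_empty)
next
  case (insert b B)
  obtain k where k: "m = b * k"
    using insert.prems(2) by blast
  with insert.prems have "b > 1" "k > 0"
    by auto
  have coprime_b: "coprime c b" if "c \<in> B" for c
    using insert.prems(1) insert.hyps(2) that by (metis insertCI pairwise_insert)
  have "pairwise coprime B"
    using insert.prems(1) by (simp add: pairwise_insert)
  moreover have "c > 1 \<and> c dvd k" if "c \<in> B" for c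
    using insert.prems(2)[of c] coprime_b[OF that] that k by (simp add: coprime_dvd_mult_right_iff)
  ultimately have IH_m: "sieve_prod B m = of_nat (if B = {} then m else if card B = 1 then \<Prod>B else 1)"
    and IH_k: "sieve_prod B k = of_nat (if B = {} then k else if card B = 1 then \<Prod>B else 1)"
    using insert.IH insert.prems(2,3) \<open>k > 0\<close> by auto
  have step: "sieve_prod B m = sieve_prod (insert b B) m * sieve_prod B k"
    using sieve_prod_insert[of b m B] \<open>b > 1\<close> insert.prems coprime_b k by simp
  consider "B = {}" | t where "B = {t}" | "B \<noteq> {}" "card B \<noteq> 1"
    by (metis card_1_singletonE)
  then show ?case
  proof cases
    case 1
    then have "sieve_prod (insert b B) m * of_nat k = of_nat b * (of_nat k :: complex)"
      using step IH_m IH_k k by simp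
    then have "sieve_prod (insert b B) m = of_nat b"
      using \<open>k > 0\<close> by simp
    then show ?thesis
      using 1 by simp
  next
    case (2 t)
    then have "t > 1" and "card (insert b B) = 2"
      using insert.prems(2) insert.hyps(2) by auto
    moreover have "of_nat t = sieve_prod (insert b B) m * (of_nat t :: complex)"
      using step IH_m IH_k 2 by simp
    ultimately show ?thesis
      by simp
  next
    case 3
    then have "card (insert b B) \<noteq> 1"
      using insert.hyps by (simp add: card_insert_if)
    moreover have "1 = sieve_prod (insert b B) m"
      using step IH_m IH_k 3 by simp
    ultimately show ?thesis
      using 3 by simp
  qed
qed

section \<open>Prime-power parts and unitary residues\<close>

definition prime_power_parts :: "nat \<Rightarrow> nat set" where
  "prime_power_parts n = (\<lambda>p. p ^ multiplicity p n) ` prime_factors n"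

lemma inj_on_prime_power_part: "inj_on (\<lambda>p. p ^ multiplicity p n) (prime_factors n)"
proof (rule inj_onI)
  fix p q assume "p \<in> prime_factors n" "q \<in> prime_factors n"
    and "p ^ multiplicity p n = q ^ multiplicity q n"
  then show "p = q"
    using prime_power_inj'(1) by (auto simp: prime_factors_multiplicity)
qed

lemma card_prime_power_parts: "card (prime_power_parts n) = card (prime_factors n)"
  unfolding prime_power_parts_def by (rule card_image[OF inj_on_prime_power_part])

lemma prod_prime_power_parts: "n > 0 \<Longrightarrow> \<Prod>(prime_power_parts n) = n"
  unfolding prime_power_parts_def
  by (simp add: prod.reindex[OF inj_on_prime_power_part] prod_prime_factors)

lemma prime_power_parts_pairwise_coprime: "pairwise coprime (prime_power_parts n)"
  unfolding prime_power_parts_def pairwise_def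
  by (auto intro: coprime_power_left_iff[THEN iffD2] coprime_power_right_iff[THEN iffD2]
      primes_coprime simp: prime_factors_multiplicity)

lemma finite_prime_power_parts [simp]: "finite (prime_power_parts n)"
  unfolding prime_power_parts_def by simp

lemma prime_power_part_dvd: "q \<in> prime_power_parts n \<Longrightarrow> q dvd n"
  unfolding prime_power_parts_def by (auto simp: multiplicity_dvd)

lemma prime_power_part_gt_1: "q \<in> prime_power_parts n \<Longrightarrow> q > 1"
  unfolding prime_power_parts_def
  by (auto simp: prime_factors_multiplicity) (metis One_nat_def one_less_power prime_gt_1_nat)

lemma prime_power_parts_nonempty:
  assumes "n > 1"
  shows "prime_power_parts n \<noteq> {}"
proof -
  obtain p where "prime p" "p dvd n"
    using assms prime_factor_nat[of n] by auto
  with assms have "p \<in> prime_factors n"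
    by (simp add: in_prime_factors_iff)
  then show ?thesis
    unfolding prime_power_parts_def by blast
qed

lemma prime_power_part_unitary_dvd:
  assumes "q \<in> prime_power_parts n" "n > 0"
  shows "unitary_dvd q n"
proof -
  obtain p where p: "p \<in> prime_factors n" "q = p ^ multiplicity p n"
    using assms(1) unfolding prime_power_parts_def by blast
  then have "prime p"
    by auto
  then have "\<not> p dvd n div q"
    using multiplicity_decompose[of n p] assms(2) p(2) prime_gt_1_nat by force
  then have "coprime q (n div q)"
    using \<open>prime p\<close> p(2) by (simp add: prime_imp_coprime)
  then show ?thesis
    unfolding unitary_dvd_def using p(2) multiplicity_dvd by simp
qed

lemma prime_power_part_dvd_unitary_divisor:
  assumes "unitary_dvd d n" "prime p" "p dvd d"
  shows "p ^ multiplicity p n dvd d"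
proof -
  have "coprime p (n div d)"
    using assms unfolding unitary_dvd_def by (metis coprime_common_divisor coprime_def dvd_trans)
  then have "coprime (p ^ multiplicity p n) (n div d)"
    by simp
  moreover have "p ^ multiplicity p n dvd d * (n div d)"
    using assms(1) multiplicity_dvd[of p n] unfolding unitary_dvd_def by simp
  ultimately show ?thesis
    by (simp add: coprime_dvd_mult_left_iff)
qed

lemma ugcd_eq_1_iff:
  assumes "n > 0" "j > 0"
  shows "ugcd j n = 1 \<longleftrightarrow> (\<forall>q\<in>prime_power_parts n. \<not> q dvd j)"
proof -
  define D where "D = {d. d dvd j \<and> unitary_dvd d n}"
  have "finite D"
    unfolding D_def using assms(2) by (auto intro: finite_subset[of _ "{..j}"] dest: dvd_imp_le)
  have "1 \<in> D"
    unfolding D_def unitary_dvd_def by simp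
  show ?thesis
  proof
    assume "ugcd j n = 1"
    then have le_1: "d \<le> 1" if "d \<in> D" for d
      using \<open>finite D\<close> that unfolding ugcd_def D_def[symmetric] by (metis Max_ge)
    show "\<forall>q\<in>prime_power_parts n. \<not> q dvd j"
    proof (intro ballI notI)
      fix q assume q: "q \<in> prime_power_parts n" "q dvd j"
      then have "q \<in> D"
        using prime_power_part_unitary_dvd[OF q(1) assms(1)] unfolding D_def by simp
      then show False
        using le_1 prime_power_part_gt_1[OF q(1)] by force
    qed
  next
    assume no_part: "\<forall>q\<in>prime_power_parts n. \<not> q dvd j"
    have "d = 1" if "d \<in> D" for d
    proof (rule ccontr)
      assume "d \<noteq> 1"
      then obtain p where p: "prime p" "p dvd d"
        using prime_factor_nat by blast
      from that have d: "d dvd j" "unitary_dvd d n"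
        unfolding D_def by auto
      then have "p \<in> prime_factors n"
        using p assms(1) unfolding unitary_dvd_def by (auto intro: dvd_trans simp: in_prime_factors_iff)
      moreover have "p ^ multiplicity p n dvd j"
        using prime_power_part_dvd_unitary_divisor[OF d(2) p] d(1) by (rule dvd_trans)
      ultimately show False
        using no_part unfolding prime_power_parts_def by blast
    qed
    with \<open>1 \<in> D\<close> have "D = {1}"
      by blast
    then show "ugcd j n = 1"
      unfolding ugcd_def D_def[symmetric] by simp
  qed
qed

abbreviation unitary_residues :: "nat \<Rightarrow> nat set" where
  "unitary_residues n \<equiv> {j\<in>{1..n}. ugcd j n = 1}"

lemma unitary_residues_eq:
  assumes "n > 1"
  shows "unitary_residues n = {j. 1 \<le> j \<and> j < n \<and> (\<forall>q\<in>prime_power_parts n. \<not> q dvd j)}"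
proof -
  obtain q where "q \<in> prime_power_parts n" "q dvd n"
    using prime_power_parts_nonempty[OF assms] prime_power_part_dvd by blast
  then have "ugcd n n \<noteq> 1"
    using ugcd_eq_1_iff[of n n] assms by auto
  then show ?thesis
    using ugcd_eq_1_iff[of n] assms by (force simp: order_le_less)
qed

section \<open>The value at 1 and the Ramanujan series\<close>

lemma exp_Lambda_star: "exp (Lambda_star n) = real (if card (prime_factors n) = 1 then n else 1)"
proof (cases "\<exists>p a. prime p \<and> a \<ge> 1 \<and> n = p ^ a")
  case True
  then obtain p a where pa: "prime p" "a \<ge> 1" "n = p ^ a"
    by blast
  have "(THE x. \<exists>q b. prime q \<and> b \<ge> 1 \<and> n = q ^ b \<and> x = real b * ln (real q)) = real a * ln (real p)"
  proof (rule the_equality)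
    fix x assume "\<exists>q b. prime q \<and> b \<ge> 1 \<and> n = q ^ b \<and> x = real b * ln (real q)"
    then obtain q b where "prime q" "b \<ge> 1" "n = q ^ b" "x = real b * ln (real q)"
      by blast
    with pa show "x = real a * ln (real p)"
      using prime_power_inj' by (metis One_nat_def less_eq_Suc_le)
  qed (use pa in blast)
  with True have "Lambda_star n = real a * ln (real p)"
    unfolding Lambda_star_def by simp
  moreover have "prime_factors n = {p}"
    using pa by (simp add: prime_factorization_prime_power)
  ultimately show ?thesis
    using pa by (simp add: ln_realpow prime_gt_0_nat exp_of_nat_mult)
next
  case False
  have "card (prime_factors n) \<noteq> 1"
  proof
    assume "card (prime_factors n) = 1"
    then obtain p where p: "prime_factors n = {p}"
      by (meson card_1_singletonE)
    then have "n > 0"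
      by (cases "n = 0") auto
    from p have "prime p" "multiplicity p n \<ge> 1"
      by (auto simp: prime_factors_multiplicity Suc_le_eq)
    moreover have "n = p ^ multiplicity p n"
      using prod_prime_factors[of n] p \<open>n > 0\<close> by simp
    ultimately show False
      using False by blast
  qed
  moreover have "Lambda_star n = 0"
    unfolding Lambda_star_def using False by (simp only: if_False)
  ultimately show ?thesis
    by simp
qed

lemma poly_unitary_cyclotomic_1:
  assumes "n > 1"
  shows "poly (unitary_cyclotomic n) 1 = of_real (exp (Lambda_star n))"
proof -
  have "poly (unitary_cyclotomic n) 1 = sieve_prod (prime_power_parts n) n"
    unfolding unitary_cyclotomic_def sieve_prod_def unitary_residues_eq[OF assms]
    by (simp add: poly_prod)
  also have "\<dots> = of_nat (if prime_power_parts n = {} then n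
      else if card (prime_power_parts n) = 1 then \<Prod>(prime_power_parts n) else 1)"
    using assms prime_power_part_gt_1 prime_power_part_dvd
    by (intro sieve_prod_pairwise_coprime prime_power_parts_pairwise_coprime) auto
  also have "\<dots> = of_real (exp (Lambda_star n))"
    using assms prime_power_parts_nonempty[OF assms]
    by (simp add: exp_Lambda_star card_prime_power_parts prod_prime_power_parts)
  finally show ?thesis .
qed

lemma sum_in_Reals_if_cnj_involution:
  assumes "\<And>j. j \<in> S \<Longrightarrow> \<sigma> j \<in> S" "\<And>j. j \<in> S \<Longrightarrow> \<sigma> (\<sigma> j) = j"
    and "\<And>j. j \<in> S \<Longrightarrow> f (\<sigma> j) = cnj (f j)"
  shows "(\<Sum>j\<in>S. f j) \<in> \<real>"
proof -
  have "cnj (\<Sum>j\<in>S. f j) = (\<Sum>j\<in>S. f (\<sigma> j))"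
    using assms(3) by simp
  also have "\<dots> = (\<Sum>j\<in>S. f j)"
    using assms(1,2) by (intro sum.reindex_bij_witness[of _ \<sigma> \<sigma>]) auto
  finally show ?thesis
    by (simp add: Reals_cnj_iff)
qed

lemma Ln_one_minus_zeta_pow_cnj:
  assumes "0 < j" "j < m"
  shows "Ln (1 - zeta m ^ (m - j)) = cnj (Ln (1 - zeta m ^ j))"
proof -
  have "Re (1 - zeta m ^ j) > 0"
    using Re_less_one_if_norm_le_one[of "zeta m ^ j"] zeta_pow_neq_1[OF assms] by simp
  then have "cnj (Ln (1 - zeta m ^ j)) = Ln (cnj (1 - zeta m ^ j))"
    by (intro cnj_Ln) (simp add: complex_nonpos_Reals_iff)
  also have "cnj (1 - zeta m ^ j) = 1 - zeta m ^ (m - j)"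
    using assms cnj_zeta_pow[of j m] by (metis complex_cnj_diff complex_cnj_one less_imp_le)
  finally show ?thesis
    by (rule sym)
qed

lemma diff_mem_unitary_residues:
  assumes "n > 1" "j \<in> unitary_residues n"
  shows "n - j \<in> unitary_residues n"
proof -
  have j: "1 \<le> j" "j < n" "\<forall>q\<in>prime_power_parts n. \<not> q dvd j"
    using assms(2) unfolding unitary_residues_eq[OF assms(1)] by auto
  have "\<not> q dvd n - j" if "q \<in> prime_power_parts n" for q
  proof
    assume "q dvd n - j"
    with prime_power_part_dvd[OF that] have "q dvd n - (n - j)"
      by (rule dvd_diff_nat)
    with j that show False
      by simp
  qed
  with j show ?thesis
    unfolding unitary_residues_eq[OF assms(1)] by auto
qed

lemma sums_unitary_ramanujan:
  assumes "n > 1"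
  shows "(\<lambda>k. unitary_ramanujan n (Suc k) / of_nat (Suc k))
           sums (- (\<Sum>j\<in>unitary_residues n. Ln (1 - zeta n ^ j)))"
proof -
  have "(\<lambda>k. (zeta n ^ j) ^ Suc k / of_nat (Suc k)) sums (- Ln (1 - zeta n ^ j))"
    if "j \<in> unitary_residues n" for j
  proof -
    from that have "0 < j" "j < n"
      unfolding unitary_residues_eq[OF assms] by auto
    then show ?thesis
      by (intro sums_minus_Ln_one_minus zeta_pow_neq_1) simp_all
  qed
  then have "(\<lambda>k. \<Sum>j\<in>unitary_residues n. (zeta n ^ j) ^ Suc k / of_nat (Suc k))
          sums (\<Sum>j\<in>unitary_residues n. - Ln (1 - zeta n ^ j))"
    by (rule sums_sum)
  then show ?thesis
    unfolding unitary_ramanujan_def sum_negf by (simp only: sum_divide_distrib power_mult)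
qed

lemma sum_Ln_one_minus_zeta_pow:
  assumes "n > 1"
  shows "(\<Sum>j\<in>unitary_residues n. Ln (1 - zeta n ^ j)) = of_real (Lambda_star n)"
    (is "?L = _")
proof -
  have "?L \<in> \<real>"
  proof (rule sum_in_Reals_if_cnj_involution[where \<sigma> = "\<lambda>j. n - j"])
    fix j assume j: "j \<in> unitary_residues n"
    then have "0 < j" "j < n"
      unfolding unitary_residues_eq[OF assms] by auto
    then show "n - (n - j) = j" "Ln (1 - zeta n ^ (n - j)) = cnj (Ln (1 - zeta n ^ j))"
      by (simp_all add: Ln_one_minus_zeta_pow_cnj)
    show "n - j \<in> unitary_residues n"
      using diff_mem_unitary_residues[OF assms j] .
  qed
  then obtain x where x: "?L = of_real x"
    by (auto elim: Reals_cases)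
  have "exp ?L = (\<Prod>j\<in>unitary_residues n. exp (Ln (1 - zeta n ^ j)))"
    by (simp add: exp_sum)
  also have "\<dots> = poly (unitary_cyclotomic n) 1"
    unfolding unitary_cyclotomic_def poly_prod
  proof (rule prod.cong[OF refl])
    fix j assume "j \<in> unitary_residues n"
    then have "1 - zeta n ^ j \<noteq> 0"
      using zeta_pow_neq_1[of j n] unfolding unitary_residues_eq[OF assms] by auto
    then show "exp (Ln (1 - zeta n ^ j)) = poly [:- (zeta n ^ j), 1:] 1"
      by simp
  qed
  finally have "exp ?L = poly (unitary_cyclotomic n) 1" .
  then have "of_real (exp x) = (of_real (exp (Lambda_star n)) :: complex)"
    unfolding poly_unitary_cyclotomic_1[OF assms] x by (simp only: exp_of_real)
  then show ?thesis
    using x by simp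
qed

theorem mainTheorem17:
  fixes n :: nat
  assumes "n > 1"
  shows "summable (\<lambda>k. unitary_ramanujan n (Suc k) / of_nat (Suc k))
    \<and> Ln (poly (unitary_cyclotomic n) 1) = complex_of_real (Lambda_star n)
    \<and> complex_of_real (Lambda_star n)
        = - (\<Sum>k. unitary_ramanujan n (Suc k) / of_nat (Suc k))"
proof -
  note series = sums_unitary_ramanujan[OF assms, unfolded sum_Ln_one_minus_zeta_pow[OF assms]]
  have "Ln (poly (unitary_cyclotomic n) 1) = complex_of_real (Lambda_star n)"
    by (simp add: poly_unitary_cyclotomic_1[OF assms] Ln_of_real)
  with sums_summable[OF series] sums_unique[OF series, symmetric] show ?thesis
    by simp
qed

end
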